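(* Let $\mathcal{D} = \langle S, A, T, s_0, \gamma, S_G\rangle$ be a goal-directed MDP with deterministic transitions (for instance a determinization $\delta(\mathcal{M})$) and $0<\gamma<1$. Let $s_i\in S\setminus S_G$ be a target state, and let $n<0<p$ be reals with $|n|\ge p$. Define the reward function $R^{s_i}: S\to\mathbb{R}$ by $R^{s_i}(s) = n$ if $s = s_i$, $R^{s_i}(s) = p$ if $s\in S_G$, and $R^{s_i}(s)=0$ otherwise, and let $V^*(s_0)$ be the optimal value at $s_0$ of the MDP $\langle S, A, T, s_0,\gamma, R^{s_i}\rangle$. Then $s_i$ is not a bottleneck state of $\mathcal{D}$ if and only if $V^*(s_0) > 0$.
   Context: A goal-directed MDP is a tuple $\langle S, A, T, s_0, \gamma, S_G\rangle$ with finite state set $S$, finite action set $A$, transition function $T: S\times A\times S\to[0,1]$ with $\sum_{s'}T(s,a,s')=1$, initial state $s_0$, discount $\gamma$, and absorbing goal set $S_G\subseteq S$. It has deterministic transitions if for every $s,a$ there is $s'$ with $T(s,a,s')=1$. A policy is a deterministic stationary map $\pi:S\to A$. A goal-reaching trace of $\pi$ from $s$ is a finite sequence $\langle x_0,\pi(x_0),x_1,\dots,x_k\rangle$ with $x_0=s$, $T(x_j,\pi(x_j),x_{j+1})>0$ for $j<k$, and $x_k\in S_G$. A state $b$ is a bottleneck state if for every policy $\pi$ and every goal-reaching trace $\langle x_0,\dots,x_k\rangle$ of $\pi$ from $s_0$, $b\in\{x_0,\dots,x_k\}$. Value convention: for a reward function $R:S\to\mathbb{R}$ and policy $\pi$,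 with state sequence $s_0=x_0,x_1,\dots$ generated by $\pi$, $V^\pi(s_0) = \mathbb{E}\big[\sum_{t=0}^{\tau}\gamma^t R(x_t)\big]$ where $\tau$ is the first time $x_t\in S_G$ (the episode terminates on entering $S_G$; if $S_G$ is never reached the sum runs over all $t\ge 0$), and $V^*(s_0)=\max_\pi V^\pi(s_0)$ over deterministic stationary policies. *)

theory Defs
  imports Complex_Main
begin

definition goal_directed_mdp :: "('s::finite \<Rightarrow> 'a::finite \<Rightarrow> 's \<Rightarrow> real) \<Rightarrow> 's set \<Rightarrow> bool" where
  "goal_directed_mdp T SG \<longleftrightarrow>
     (\<forall>s a s'. 0 \<le> T s a s' \<and> T s a s' \<le> 1) \<and>
     (\<forall>s a. (\<Sum>s'\<in>UNIV. T s a s') = 1) \<and>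
     (\<forall>s\<in>SG. \<forall>a. T s a s = 1)"

definition deterministic_transitions :: "('s::finite \<Rightarrow> 'a::finite \<Rightarrow> 's \<Rightarrow> real) \<Rightarrow> bool" where
  "deterministic_transitions T \<longleftrightarrow> (\<forall>s a. \<exists>s'. T s a s' = 1)"

definition goal_reaching_trace ::
  "('s::finite \<Rightarrow> 'a::finite \<Rightarrow> 's \<Rightarrow> real) \<Rightarrow> 's set \<Rightarrow> ('s \<Rightarrow> 'a) \<Rightarrow> 's \<Rightarrow> 's list \<Rightarrow> bool" where
  "goal_reaching_trace T SG pol s xs \<longleftrightarrow>
     xs \<noteq> [] \<and> hd xs = s \<and>
     (\<forall>j. j + 1 < length xs \<longrightarrow> T (xs ! j) (pol (xs ! j)) (xs ! (j + 1)) > 0) \<and>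
     last xs \<in> SG"

definition bottleneck_state ::
  "('s::finite \<Rightarrow> 'a::finite \<Rightarrow> 's \<Rightarrow> real) \<Rightarrow> 's \<Rightarrow> 's set \<Rightarrow> 's \<Rightarrow> bool" where
  "bottleneck_state T s0 SG b \<longleftrightarrow>
     (\<forall>pol xs. goal_reaching_trace T SG pol s0 xs \<longrightarrow> b \<in> set xs)"

text \<open>Expected truncated discounted return: expectation of the sum of gamma^t R(x_t) over
  t < k and t \<le> tau (episode stops on entering SG), starting in s, under policy pol.\<close>
fun horizon_value ::
  "('s::finite \<Rightarrow> 'a::finite \<Rightarrow> 's \<Rightarrow> real) \<Rightarrow> real \<Rightarrow> 's set \<Rightarrow> ('s \<Rightarrow> real) \<Rightarrow> ('s \<Rightarrow> 'a)
     \<Rightarrow> nat \<Rightarrow> 's \<Rightarrow> real" where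
  "horizon_value T \<gamma> SG R pol 0 s = 0"
| "horizon_value T \<gamma> SG R pol (Suc k) s =
     R s + (if s \<in> SG then 0
            else \<gamma> * (\<Sum>s'\<in>UNIV. T s (pol s) s' * horizon_value T \<gamma> SG R pol k s'))"

definition policy_value ::
  "('s::finite \<Rightarrow> 'a::finite \<Rightarrow> 's \<Rightarrow> real) \<Rightarrow> real \<Rightarrow> 's set \<Rightarrow> ('s \<Rightarrow> real) \<Rightarrow> ('s \<Rightarrow> 'a)
     \<Rightarrow> 's \<Rightarrow> real" where
  "policy_value T \<gamma> SG R pol s = lim (\<lambda>k. horizon_value T \<gamma> SG R pol k s)"

definition optimal_value ::
  "('s::finite \<Rightarrow> 'a::finite \<Rightarrow> 's \<Rightarrow> real) \<Rightarrow> real \<Rightarrow> 's set \<Rightarrow> ('s \<Rightarrow> real) \<Rightarrow> 's \<Rightarrow> real" where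
  "optimal_value T \<gamma> SG R s = (MAX pol. policy_value T \<gamma> SG R pol s)"

definition target_reward :: "'s \<Rightarrow> 's set \<Rightarrow> real \<Rightarrow> real \<Rightarrow> 's \<Rightarrow> real" where
  "target_reward si SG n p s = (if s = si then n else if s \<in> SG then p else 0)"

end

theory Submission
  imports Defs
begin

text \<open>With deterministic transitions every policy has a single run from s0, so a state is
  a bottleneck iff every run that reaches S_G visits it on the way. Since the episode stops
  at the first goal state, a run first reaching S_G at time \<tau> has value
  \<open>(\<Sum>t<\<tau>. \<gamma>^t R(x_t)) + \<gamma>^\<tau> p\<close>: if it avoids s_i this is \<open>\<gamma>^\<tau> p > 0\<close>; if it visits s_i
  at some t < \<tau> it is at most \<open>\<gamma>^t n + \<gamma>^\<tau> p \<le> (\<gamma>^\<tau> - \<gamma>^t) p \<le> 0\<close>; and a run never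
  reaching S_G collects only nonpositive rewards.\<close>

definition successor :: "('s::finite \<Rightarrow> 'a::finite \<Rightarrow> 's \<Rightarrow> real) \<Rightarrow> 's \<Rightarrow> 'a \<Rightarrow> 's" where
  "successor T s a = (SOME s'. T s a s' = 1)"

lemma deterministic_transition_eq:
  assumes "goal_directed_mdp T SG" "deterministic_transitions T"
  shows "T s a s' = (if s' = successor T s a then 1 else 0)"
proof -
  let ?u = "successor T s a"
  have "\<exists>s'. T s a s' = 1"
    using assms(2) unfolding deterministic_transitions_def by blast
  then have succ: "T s a ?u = 1"
    unfolding successor_def by (rule someI_ex)
  have nonneg: "\<And>x. 0 \<le> T s a x" and total: "(\<Sum>x\<in>UNIV. T s a x) = 1"
    using assms(1) unfolding goal_directed_mdp_def by blast+
  have "(\<Sum>x\<in>UNIV. T s a x) = T s a ?u + (\<Sum>x\<in>UNIV - {?u}. T s a x)"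
    by (simp add: sum.remove)
  with succ total have "(\<Sum>x\<in>UNIV - {?u}. T s a x) = 0" by simp
  then have "\<forall>x\<in>UNIV - {?u}. T s a x = 0"
    using sum_nonneg_eq_0_iff[of "UNIV - {?u}" "T s a"] nonneg by simp
  with succ show ?thesis by auto
qed

lemma sum_deterministic_transition:
  assumes "goal_directed_mdp T SG" "deterministic_transitions T"
  shows "(\<Sum>s'\<in>UNIV. T s a s' * h s') = h (successor T s a)"
proof -
  have "(\<Sum>s'\<in>UNIV. T s a s' * h s') = (\<Sum>s'\<in>UNIV. if s' = successor T s a then h s' else 0)"
    by (rule sum.cong) (auto simp: deterministic_transition_eq[OF assms])
  then show ?thesis by (simp add: sum.delta')
qed

definition policy_run ::
  "('s::finite \<Rightarrow> 'a::finite \<Rightarrow> 's \<Rightarrow> real) \<Rightarrow> ('s \<Rightarrow> 'a) \<Rightarrow> 's \<Rightarrow> nat \<Rightarrow> 's" where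
  "policy_run T pol s t = ((\<lambda>x. successor T x (pol x)) ^^ t) s"

lemma policy_run_0 [simp]: "policy_run T pol s 0 = s"
  by (simp add: policy_run_def)

lemma policy_run_Suc: "policy_run T pol s (Suc t) = policy_run T pol (successor T s (pol s)) t"
  unfolding policy_run_def funpow.simps(2) comp_apply by (rule funpow_swap1)

lemma policy_run_Suc':
  "policy_run T pol s (Suc t) = successor T (policy_run T pol s t) (pol (policy_run T pol s t))"
  by (simp add: policy_run_def)

text \<open>The t-th term of the discounted return; it vanishes once the run has met S_G
  strictly before t, because the episode terminates there.\<close>
definition stage_reward ::
  "('s::finite \<Rightarrow> 'a::finite \<Rightarrow> 's \<Rightarrow> real) \<Rightarrow> real \<Rightarrow> 's set \<Rightarrow> ('s \<Rightarrow> real) \<Rightarrow> ('s \<Rightarrow> 'a)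
     \<Rightarrow> 's \<Rightarrow> nat \<Rightarrow> real" where
  "stage_reward T \<gamma> SG R pol s t =
     (if \<forall>j<t. policy_run T pol s j \<notin> SG then \<gamma>^t * R (policy_run T pol s t) else 0)"

lemma stage_reward_Suc:
  "stage_reward T \<gamma> SG R pol s (Suc t) =
     (if s \<in> SG then 0 else \<gamma> * stage_reward T \<gamma> SG R pol (successor T s (pol s)) t)"
proof -
  have "(\<forall>j<Suc t. policy_run T pol s j \<notin> SG) \<longleftrightarrow>
        s \<notin> SG \<and> (\<forall>j<t. policy_run T pol (successor T s (pol s)) j \<notin> SG)"
    by (auto simp: policy_run_Suc less_Suc_eq_0_disj)
  then show ?thesis by (auto simp: stage_reward_def policy_run_Suc)
qed

lemma horizon_value_eq_sum_stage_reward: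
  assumes "goal_directed_mdp T SG" "deterministic_transitions T"
  shows "horizon_value T \<gamma> SG R pol k s = (\<Sum>t<k. stage_reward T \<gamma> SG R pol s t)"
proof (induction k arbitrary: s)
  case 0
  then show ?case by simp
next
  case (Suc k)
  have "stage_reward T \<gamma> SG R pol s 0 = R s"
    by (simp add: stage_reward_def)
  moreover have "horizon_value T \<gamma> SG R pol (Suc k) s =
     R s + (if s \<in> SG then 0 else \<gamma> * horizon_value T \<gamma> SG R pol k (successor T s (pol s)))"
    by (simp add: sum_deterministic_transition[OF assms])
  ultimately show ?case
    using Suc by (simp add: sum.lessThan_Suc_shift stage_reward_Suc sum_distrib_left
        del: sum.lessThan_Suc)
qed

lemma summable_stage_reward:
  assumes "0 \<le> \<gamma>" "\<gamma> < 1"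
  shows "summable (stage_reward T \<gamma> SG R pol s)"
proof (rule summable_comparison_test)
  let ?M = "\<Sum>x\<in>UNIV. \<bar>R x\<bar>"
  show "\<exists>N. \<forall>t\<ge>N. norm (stage_reward T \<gamma> SG R pol s t) \<le> ?M * \<gamma>^t"
  proof (intro exI allI impI)
    fix t :: nat
    have "\<bar>R (policy_run T pol s t)\<bar> \<le> ?M"
      by (rule member_le_sum) auto
    then have "\<gamma>^t * \<bar>R (policy_run T pol s t)\<bar> \<le> \<gamma>^t * ?M"
      by (rule mult_left_mono) (simp add: assms)
    then show "norm (stage_reward T \<gamma> SG R pol s t) \<le> ?M * \<gamma>^t"
      using assms by (auto simp: stage_reward_def abs_mult mult.commute)
  qed
  show "summable (\<lambda>t. ?M * \<gamma>^t)"
    using assms by (intro summable_mult summable_geometric) auto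
qed

lemma policy_value_eq_suminf:
  assumes "goal_directed_mdp T SG" "deterministic_transitions T" "0 \<le> \<gamma>" "\<gamma> < 1"
  shows "policy_value T \<gamma> SG R pol s = (\<Sum>t. stage_reward T \<gamma> SG R pol s t)"
  unfolding policy_value_def horizon_value_eq_sum_stage_reward[OF assms(1,2)]
  by (rule limI) (rule summable_LIMSEQ[OF summable_stage_reward[OF assms(3,4)]])

lemma policy_value_first_goal:
  assumes "goal_directed_mdp T SG" "deterministic_transitions T" "0 \<le> \<gamma>" "\<gamma> < 1"
    and goal: "policy_run T pol s \<tau> \<in> SG"
    and before: "\<And>t. t < \<tau> \<Longrightarrow> policy_run T pol s t \<notin> SG"
  shows "policy_value T \<gamma> SG R pol s =
           (\<Sum>t<\<tau>. \<gamma>^t * R (policy_run T pol s t)) + \<gamma>^\<tau> * R (policy_run T pol s \<tau>)"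
proof -
  let ?g = "stage_reward T \<gamma> SG R pol s"
  have "?g t = 0" if "t \<notin> {..<Suc \<tau>}" for t
    using that goal by (auto simp: stage_reward_def)
  then have "?g sums (\<Sum>t<Suc \<tau>. ?g t)"
    by (intro sums_finite) auto
  moreover have "(\<Sum>t<Suc \<tau>. ?g t) = (\<Sum>t<Suc \<tau>. \<gamma>^t * R (policy_run T pol s t))"
    using before by (intro sum.cong) (auto simp: stage_reward_def)
  ultimately show ?thesis
    unfolding policy_value_eq_suminf[OF assms(1-4)] by (simp add: sums_iff)
qed

lemma policy_value_never_goal_nonpos:
  assumes "goal_directed_mdp T SG" "deterministic_transitions T" "0 \<le> \<gamma>" "\<gamma> < 1"
    and "\<And>t. policy_run T pol s t \<notin> SG" and "\<And>x. x \<notin> SG \<Longrightarrow> R x \<le> 0"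
  shows "policy_value T \<gamma> SG R pol s \<le> 0"
proof -
  have "stage_reward T \<gamma> SG R pol s t \<le> 0" for t
    using assms(3,5,6) by (simp add: stage_reward_def mult_nonneg_nonpos)
  then have "(\<Sum>t. stage_reward T \<gamma> SG R pol s t) \<le> (\<Sum>t. 0::real)"
    using summable_stage_reward[OF assms(3,4)] by (intro suminf_le) auto
  then show ?thesis
    by (simp add: policy_value_eq_suminf[OF assms(1-4)])
qed

lemma first_goal_time:
  assumes "policy_run T pol s k \<in> SG"
  obtains \<tau> where "\<tau> \<le> k" "policy_run T pol s \<tau> \<in> SG"
    "\<And>t. t < \<tau> \<Longrightarrow> policy_run T pol s t \<notin> SG"
proof
  let ?\<tau> = "LEAST t. policy_run T pol s t \<in> SG"
  show "?\<tau> \<le> k" "policy_run T pol s ?\<tau> \<in> SG"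
    using assms by (rule Least_le, rule LeastI)
  show "\<And>t. t < ?\<tau> \<Longrightarrow> policy_run T pol s t \<notin> SG"
    by (rule not_less_Least)
qed

lemma goal_reaching_trace_nth:
  assumes "goal_directed_mdp T SG" "deterministic_transitions T"
    and trace: "goal_reaching_trace T SG pol s xs" and "j < length xs"
  shows "xs ! j = policy_run T pol s j"
  using assms(4)
proof (induction j)
  case 0
  with trace show ?case by (simp add: goal_reaching_trace_def) (metis hd_conv_nth)
next
  case (Suc j)
  then have "T (xs ! j) (pol (xs ! j)) (xs ! Suc j) > 0"
    using trace unfolding goal_reaching_trace_def by auto
  then have "xs ! Suc j = successor T (xs ! j) (pol (xs ! j))"
    by (simp add: deterministic_transition_eq[OF assms(1,2)] split: if_splits)
  with Suc show ?case by (simp add: policy_run_Suc')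
qed

lemma goal_reaching_trace_policy_run:
  assumes "goal_directed_mdp T SG" "deterministic_transitions T"
    and "policy_run T pol s k \<in> SG"
  shows "goal_reaching_trace T SG pol s (map (policy_run T pol s) [0..<Suc k])"
  using assms(3)
  by (auto simp: goal_reaching_trace_def hd_map last_map nth_append
      deterministic_transition_eq[OF assms(1,2)] policy_run_Suc' simp del: upt_Suc)

lemma not_bottleneck_state_iff:
  assumes "goal_directed_mdp T SG" "deterministic_transitions T"
  shows "\<not> bottleneck_state T s0 SG b \<longleftrightarrow>
           (\<exists>pol k. policy_run T pol s0 k \<in> SG \<and> (\<forall>t\<le>k. policy_run T pol s0 t \<noteq> b))"
proof
  assume "\<not> bottleneck_state T s0 SG b"
  then obtain pol xs where trace: "goal_reaching_trace T SG pol s0 xs" and "b \<notin> set xs"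
    unfolding bottleneck_state_def by blast
  define k where "k = length xs - 1"
  have "xs \<noteq> []" "last xs \<in> SG"
    using trace unfolding goal_reaching_trace_def by auto
  then have k: "k < length xs" and "xs ! k \<in> SG"
    by (auto simp: k_def last_conv_nth)
  then have "policy_run T pol s0 k \<in> SG"
    using goal_reaching_trace_nth[OF assms trace] by simp
  moreover have "policy_run T pol s0 t \<noteq> b" if "t \<le> k" for t
  proof -
    have "t < length xs" using that k by simp
    then show ?thesis
      using goal_reaching_trace_nth[OF assms trace] nth_mem \<open>b \<notin> set xs\<close> by metis
  qed
  ultimately show "\<exists>pol k. policy_run T pol s0 k \<in> SG \<and> (\<forall>t\<le>k. policy_run T pol s0 t \<noteq> b)"
    by blast
next
  assume "\<exists>pol k. policy_run T pol s0 k \<in> SG \<and> (\<forall>t\<le>k. policy_run T pol s0 t \<noteq> b)"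
  then obtain pol k where goal: "policy_run T pol s0 k \<in> SG"
    and avoid: "\<forall>t\<le>k. policy_run T pol s0 t \<noteq> b"
    by blast
  have "b \<notin> set (map (policy_run T pol s0) [0..<Suc k])"
    using avoid by (auto simp: less_Suc_eq_le simp del: upt_Suc)
  with goal_reaching_trace_policy_run[OF assms goal] show "\<not> bottleneck_state T s0 SG b"
    unfolding bottleneck_state_def by blast
qed

lemma policy_value_target_reward_pos:
  assumes "goal_directed_mdp T SG" "deterministic_transitions T" "0 < \<gamma>" "\<gamma> < 1" "0 < p"
    and "policy_run T pol s k \<in> SG" and avoid: "\<forall>t\<le>k. policy_run T pol s t \<noteq> si"
  shows "policy_value T \<gamma> SG (target_reward si SG n p) pol s > 0"
proof -
  obtain \<tau> where "\<tau> \<le> k" and goal: "policy_run T pol s \<tau> \<in> SG"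
    and before: "\<And>t. t < \<tau> \<Longrightarrow> policy_run T pol s t \<notin> SG"
    using first_goal_time[OF assms(6)] by blast
  have "(\<Sum>t<\<tau>. \<gamma>^t * target_reward si SG n p (policy_run T pol s t)) = 0"
    using before avoid \<open>\<tau> \<le> k\<close> by (intro sum.neutral) (auto simp: target_reward_def)
  moreover have "target_reward si SG n p (policy_run T pol s \<tau>) = p"
    using goal avoid \<open>\<tau> \<le> k\<close> by (simp add: target_reward_def)
  moreover have "policy_value T \<gamma> SG (target_reward si SG n p) pol s =
      (\<Sum>t<\<tau>. \<gamma>^t * target_reward si SG n p (policy_run T pol s t))
      + \<gamma>^\<tau> * target_reward si SG n p (policy_run T pol s \<tau>)"
    using assms(3,4) by (intro policy_value_first_goal[OF assms(1,2) _ _ goal before]) auto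
  ultimately have "policy_value T \<gamma> SG (target_reward si SG n p) pol s = \<gamma>^\<tau> * p"
    by simp
  moreover have "\<gamma>^\<tau> * p > 0"
    using assms(3,5) by simp
  ultimately show ?thesis by linarith
qed

lemma policy_value_target_reward_nonpos:
  assumes "goal_directed_mdp T SG" "deterministic_transitions T" "0 \<le> \<gamma>" "\<gamma> < 1"
    and "si \<notin> SG" "n < 0" "0 \<le> p" "\<bar>n\<bar> \<ge> p"
    and visits: "\<And>k. policy_run T pol s k \<in> SG \<Longrightarrow> \<exists>t\<le>k. policy_run T pol s t = si"
  shows "policy_value T \<gamma> SG (target_reward si SG n p) pol s \<le> 0"
proof (cases "\<exists>k. policy_run T pol s k \<in> SG")
  case False
  then show ?thesis
    using assms(3,4,6)
    by (intro policy_value_never_goal_nonpos[OF assms(1,2)]) (auto simp: target_reward_def)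
next
  case True
  let ?R = "target_reward si SG n p"
  let ?f = "\<lambda>t. \<gamma>^t * ?R (policy_run T pol s t)"
  obtain \<tau> where goal: "policy_run T pol s \<tau> \<in> SG"
    and before: "\<And>t. t < \<tau> \<Longrightarrow> policy_run T pol s t \<notin> SG"
  proof -
    from True obtain k where "policy_run T pol s k \<in> SG" by blast
    with first_goal_time that show ?thesis by blast
  qed
  obtain t1 where "t1 \<le> \<tau>" and at_si: "policy_run T pol s t1 = si"
    using visits[OF goal] by blast
  with goal assms(5) have "t1 < \<tau>" by (metis le_neq_implies_less)
  have rest: "(\<Sum>t\<in>{..<\<tau>} - {t1}. ?f t) \<le> 0"
    using before assms(3,6)
    by (intro sum_nonpos) (auto simp: target_reward_def mult_nonneg_nonpos)
  have "?f t1 = \<gamma>^t1 * n"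
    using at_si by (simp add: target_reward_def)
  moreover have "(\<Sum>t<\<tau>. ?f t) = ?f t1 + (\<Sum>t\<in>{..<\<tau>} - {t1}. ?f t)"
    using \<open>t1 < \<tau>\<close> by (intro sum.remove) auto
  ultimately have "(\<Sum>t<\<tau>. ?f t) \<le> \<gamma>^t1 * n"
    using rest by linarith
  moreover have "\<gamma>^\<tau> * p \<le> \<gamma>^t1 * (- n)"
  proof -
    have "\<gamma>^\<tau> \<le> \<gamma>^t1"
      using assms(3,4) \<open>t1 < \<tau>\<close> by (intro power_decreasing) auto
    then show ?thesis
      using assms(3,6-8) by (intro mult_mono) auto
  qed
  moreover have "policy_value T \<gamma> SG ?R pol s = (\<Sum>t<\<tau>. ?f t) + \<gamma>^\<tau> * p"
  proof -
    have "?R (policy_run T pol s \<tau>) = p"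
      using goal assms(5) by (auto simp: target_reward_def)
    moreover have "policy_value T \<gamma> SG ?R pol s =
        (\<Sum>t<\<tau>. ?f t) + \<gamma>^\<tau> * ?R (policy_run T pol s \<tau>)"
      by (rule policy_value_first_goal[OF assms(1,2) _ _ goal before]) (use assms(3,4) in auto)
    ultimately show ?thesis by simp
  qed
  ultimately show ?thesis by linarith
qed

lemma optimal_value_pos_iff:
  "optimal_value T \<gamma> SG R s > 0 \<longleftrightarrow> (\<exists>pol. policy_value T \<gamma> SG R pol s > 0)"
  unfolding optimal_value_def by (subst Max_gr_iff) auto

theorem proposition3:
  fixes T :: "'s::finite \<Rightarrow> 'a::finite \<Rightarrow> 's \<Rightarrow> real"
    and SG :: "'s set" and s0 si :: 's and \<gamma> n p :: real
  assumes "goal_directed_mdp T SG"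
    and "deterministic_transitions T"
    and "0 < \<gamma>" and "\<gamma> < 1"
    and "si \<notin> SG"
    and "n < 0" and "0 < p" and "\<bar>n\<bar> \<ge> p"
  shows "\<not> bottleneck_state T s0 SG si \<longleftrightarrow>
         optimal_value T \<gamma> SG (target_reward si SG n p) s0 > 0"
proof
  assume "\<not> bottleneck_state T s0 SG si"
  then obtain pol k where "policy_run T pol s0 k \<in> SG" "\<forall>t\<le>k. policy_run T pol s0 t \<noteq> si"
    using not_bottleneck_state_iff[OF assms(1,2)] by blast
  then show "optimal_value T \<gamma> SG (target_reward si SG n p) s0 > 0"
    using policy_value_target_reward_pos[OF assms(1-4,7)] optimal_value_pos_iff by blast
next
  assume "optimal_value T \<gamma> SG (target_reward si SG n p) s0 > 0"
  then obtain pol where "policy_value T \<gamma> SG (target_reward si SG n p) pol s0 > 0"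
    using optimal_value_pos_iff by blast
  then show "\<not> bottleneck_state T s0 SG si"
    using policy_value_target_reward_nonpos[OF assms(1,2) _ assms(4-6) _ assms(8)] assms(3,7)
      not_bottleneck_state_iff[OF assms(1,2)]
    by (meson less_imp_le linorder_not_le)
qed

end
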